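(* Let $k,\ell\in\mathbb Z_{\ge1}$ with $k\ne\ell$, and $\lambda_1,\lambda_2\in\mathbb C$. Then $\widetilde{\mathrm{Sol}}_{(k,\ell)}(-\lambda_1,-\lambda_2)\neq\{0\}$ if and only if $(\lambda_1,\lambda_2)\in\{(1-k,1-\ell+k),(1-k+\ell,1-\ell)\}$. Moreover $\widetilde{\mathrm{Sol}}_{(k,\ell)}(-(1-k),-(1-\ell+k))=\mathbb C\,p_+^{(k,\ell)}(t)$ and $\widetilde{\mathrm{Sol}}_{(k,\ell)}(-(1-k+\ell),-(1-\ell))=\mathbb C\,p_-^{(k,\ell)}(t)$.
   Context: Let $\vartheta_t=t\frac d{dt}$. For $a,b,\mu\in\mathbb C$ define $D^{(a,b)}(\mu;t)=\frac d{dt}+(\mu+a-\frac b2-1)(a-\vartheta_t)+\frac14t(a-1-\vartheta_t)(a-\vartheta_t)(b-\vartheta_t)$, and $D^{(a,b)}(\mu;-t)=-\frac d{dt}+(\mu+a-\frac b2-1)(a-\vartheta_t)-\frac14t(a-1-\vartheta_t)(a-\vartheta_t)(b-\vartheta_t)$ (substitution $t\mapsto -t$). For $k,\ell\in\mathbb Z_{\ge0}$, $\widetilde{\mathrm{Sol}}_{(k,\ell)}(-\lambda_1,-\lambda_2)=\{p\in\mathbb C[t]:\deg p\le\min(k,\ell),\ D^{(k,\ell)}(\lambda_1;t)p=0,\ D^{(\ell,k)}(\lambda_2;-t)p=0\}$. Polynomials: $p_\pm^{(k,\ell)}(t)=\sum_{m=0}^{\min(k,\ell)}\frac{(\pm1)^m}{2^m}m!\binom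 km\binom\ell m t^m$. *)

theory Defs
  imports Complex_Main "HOL-Computational_Algebra.Polynomial"
begin

definition theta :: "complex poly \<Rightarrow> complex poly" where
  "theta p = [:0, 1:] * pderiv p"

definition cmt :: "complex \<Rightarrow> complex poly \<Rightarrow> complex poly" where
  "cmt c p = smult c p - theta p"

definition Dplus :: "complex \<Rightarrow> complex \<Rightarrow> complex \<Rightarrow> complex poly \<Rightarrow> complex poly" where
  "Dplus a b mu p = pderiv p + smult (mu + a - b / 2 - 1) (cmt a p)
      + smult (1/4) ([:0, 1:] * cmt (a - 1) (cmt a (cmt b p)))"

text \<open>D^{(a,b)}(mu; -t) (substitution t |-> -t)\<close>
definition Dminus :: "complex \<Rightarrow> complex \<Rightarrow> complex \<Rightarrow> complex poly \<Rightarrow> complex poly" where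
  "Dminus a b mu p = - pderiv p + smult (mu + a - b / 2 - 1) (cmt a p)
      - smult (1/4) ([:0, 1:] * cmt (a - 1) (cmt a (cmt b p)))"

text \<open>SolTilde k l nu1 nu2 is the paper's Sol~_{(k,l)}(nu1,nu2); so
  Sol~_{(k,l)}(-lambda1,-lambda2) = SolTilde k l (-lambda1) (-lambda2) uses D^{(k,l)}(lambda1;t)
  and D^{(l,k)}(lambda2;-t).\<close>
definition SolTilde :: "nat \<Rightarrow> nat \<Rightarrow> complex \<Rightarrow> complex \<Rightarrow> complex poly set" where
  "SolTilde k l nu1 nu2 = {p. degree p \<le> min k l
      \<and> Dplus (of_nat k) (of_nat l) (- nu1) p = 0
      \<and> Dminus (of_nat l) (of_nat k) (- nu2) p = 0}"

definition p_pm :: "complex \<Rightarrow> nat \<Rightarrow> nat \<Rightarrow> complex poly" where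
  "p_pm s k l = (\<Sum>m\<le>min k l. monom (s ^ m / 2 ^ m * of_nat (fact m) * of_nat (k choose m)
                                     * of_nat (l choose m)) m)"

abbreviation "p_plus \<equiv> p_pm 1"
abbreviation "p_minus \<equiv> p_pm (-1)"

end

(* Write p = sum c_m t^m.  Each of the two equations is a three-term recurrence for the c_m, and in
   their sum the derivative terms cancel.  A nonzero solution of the first equation has c_0 <> 0, so
   the sum yields A k + B l = 0 for the shifted parameters A = lambda_1 + k - l/2 - 1,
   B = lambda_2 + l - k/2 - 1, and then the two-term recurrence
   (j + 1) c_(j+1) = q (k - j) (l - j) c_j  with  q = (k - l) / (4 (A + B)):
   p is c_0 times the terminating hypergeometric polynomial 2F0(-k, -l; ; q t).  The constant term of
   the first equation gives A = -q l, hence B = q k and 4 q^2 = 1, i.e. q = 1/2 or q = -1/2, which are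
   the two parameter values, and p = c_0 p_+ or p = c_0 p_-.  Conversely, when 4 q^2 = 1 the recurrence
   turns D^(k,l)(lambda_1; t) into (A + q l)(k - theta_t) and D^(l,k)(lambda_2; -t) into
   (B - q k)(l - theta_t), which both vanish at these parameters. *)

theory Submission
  imports Defs
begin

lemma coeff_theta: "coeff (theta p) m = of_nat m * coeff p m"
  unfolding theta_def by (cases m) (simp_all add: coeff_pderiv)

lemma coeff_cmt: "coeff (cmt c p) m = (c - of_nat m) * coeff p m"
  unfolding cmt_def by (simp add: coeff_theta algebra_simps)

lemma coeff_Dplus_0: "coeff (Dplus a b mu p) 0 = coeff p 1 + (mu + a - b/2 - 1) * a * coeff p 0"
  by (simp add: Dplus_def coeff_pderiv coeff_cmt)

lemma coeff_Dplus_Suc: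
  "coeff (Dplus a b mu p) (Suc j) =
     of_nat (Suc (Suc j)) * coeff p (Suc (Suc j))
     + (mu + a - b/2 - 1) * (a - of_nat (Suc j)) * coeff p (Suc j)
     + (a - 1 - of_nat j) * ((a - of_nat j) * (b - of_nat j) / 4 * coeff p j)"
  by (simp add: Dplus_def coeff_pderiv coeff_cmt del: of_nat_Suc)

lemma coeff_Dminus_0: "coeff (Dminus a b mu p) 0 = - coeff p 1 + (mu + a - b/2 - 1) * a * coeff p 0"
  by (simp add: Dminus_def coeff_pderiv coeff_cmt)

lemma coeff_Dminus_Suc:
  "coeff (Dminus a b mu p) (Suc j) =
     - (of_nat (Suc (Suc j)) * coeff p (Suc (Suc j)))
     + (mu + a - b/2 - 1) * (a - of_nat (Suc j)) * coeff p (Suc j)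
     - (a - 1 - of_nat j) * ((a - of_nat j) * (b - of_nat j) / 4 * coeff p j)"
  by (simp add: Dminus_def coeff_pderiv coeff_cmt del: of_nat_Suc)

lemma theta_smult: "theta (smult c p) = smult c (theta p)"
  by (simp add: theta_def pderiv_smult)

lemma cmt_smult: "cmt a (smult c p) = smult c (cmt a p)"
  by (simp add: cmt_def theta_smult smult_diff_right mult.commute)

lemma Dplus_smult: "Dplus a b mu (smult c p) = smult c (Dplus a b mu p)"
  by (simp add: Dplus_def cmt_smult pderiv_smult smult_add_right mult.commute mult.left_commute)

lemma Dminus_smult: "Dminus a b mu (smult c p) = smult c (Dminus a b mu p)"
  by (simp add: Dminus_def cmt_smult pderiv_smult smult_add_right smult_diff_right mult.commute mult.left_commute)

lemma coeff_Dplus_add_Dminus_0: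
  "coeff (Dplus a b mu p + Dminus b a nu p) 0
     = ((mu + a - b/2 - 1) * a + (nu + b - a/2 - 1) * b) * coeff p 0"
  by (simp add: coeff_Dplus_0 coeff_Dminus_0 algebra_simps)

lemma coeff_Dplus_add_Dminus_Suc:
  "coeff (Dplus a b mu p + Dminus b a nu p) (Suc j)
     = ((mu + a - b/2 - 1) * (a - of_nat (Suc j)) + (nu + b - a/2 - 1) * (b - of_nat (Suc j)))
         * coeff p (Suc j)
       + (a - b) * (a - of_nat j) * (b - of_nat j) / 4 * coeff p j"
  unfolding coeff_add coeff_Dplus_Suc coeff_Dminus_Suc by (simp add: field_simps)

lemma Dplus_eq_0_coeff_0_imp_eq_0:
  assumes "Dplus a b mu p = 0" and "coeff p 0 = 0"
  shows "p = 0"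
proof -
  have "coeff p m = 0 \<and> coeff p (Suc m) = 0" for m
  proof (induction m)
    case 0
    show ?case using coeff_Dplus_0[of a b mu p] assms by simp
  next
    case (Suc m)
    then have "of_nat (Suc (Suc m)) * coeff p (Suc (Suc m)) = (0::complex)"
      using coeff_Dplus_Suc[of a b mu p m] assms(1) by simp
    then show ?case using Suc by (simp del: of_nat_Suc)
  qed
  then show ?thesis by (intro poly_eqI) simp
qed

text \<open>The coefficient recurrence of \<open>c\<^sub>0 \<cdot> \<^sub>2F\<^sub>0(-a, -b; ; q t)\<close>; \<open>p_pm s k l\<close> is the
  case \<open>q = s/2\<close>, \<open>a = k\<close>, \<open>b = l\<close>, \<open>c\<^sub>0 = 1\<close>.\<close>
definition F20_recurrence :: "complex \<Rightarrow> complex \<Rightarrow> complex \<Rightarrow> complex poly \<Rightarrow> bool" where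
  "F20_recurrence q a b p \<longleftrightarrow>
     (\<forall>j. of_nat (Suc j) * coeff p (Suc j) = q * (a - of_nat j) * (b - of_nat j) * coeff p j)"

lemma F20_recurrence_unique:
  assumes "F20_recurrence q a b p" and "F20_recurrence q a b r" and "coeff r 0 = 1"
  shows "p = smult (coeff p 0) r"
proof (rule poly_eqI)
  fix m
  show "coeff p m = coeff (smult (coeff p 0) r) m"
  proof (induction m)
    case (Suc m)
    have "of_nat (Suc m) * coeff p (Suc m) = q * (a - of_nat m) * (b - of_nat m) * coeff p m"
      using assms(1) unfolding F20_recurrence_def by blast
    also have "\<dots> = coeff p 0 * (q * (a - of_nat m) * (b - of_nat m) * coeff r m)"
      using Suc.IH by simp
    also have "\<dots> = of_nat (Suc m) * (coeff p 0 * coeff r (Suc m))"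
      using assms(2) unfolding F20_recurrence_def by simp
    finally show ?case by (simp del: of_nat_Suc)
  qed (simp add: assms(3))
qed

lemma Dplus_eq_smult_cmt_if_F20_recurrence:
  assumes rec: "F20_recurrence q a b p" and q: "4 * q^2 = 1"
  shows "Dplus a b mu p = smult (mu + a - b/2 - 1 + q * b) (cmt a p)"
proof (rule poly_eqI)
  fix m
  show "coeff (Dplus a b mu p) m = coeff (smult (mu + a - b/2 - 1 + q * b) (cmt a p)) m"
  proof (cases m)
    case 0
    then show ?thesis
      using rec[unfolded F20_recurrence_def, rule_format, of 0]
      by (simp add: coeff_Dplus_0 coeff_cmt algebra_simps)
  next
    case (Suc j)
    have step: "of_nat (Suc (Suc j)) * coeff p (Suc (Suc j))
        = q * (a - of_nat (Suc j)) * (b - of_nat (Suc j)) * coeff p (Suc j)"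
      using rec unfolding F20_recurrence_def by blast
    have prev: "(a - of_nat j) * (b - of_nat j) / 4 * coeff p j = q * (of_nat (Suc j) * coeff p (Suc j))"
      using q rec[unfolded F20_recurrence_def, rule_format, of j] by algebra
    show ?thesis
      unfolding Suc coeff_Dplus_Suc step prev by (simp add: coeff_cmt algebra_simps)
  qed
qed

lemma Dminus_eq_smult_cmt_if_F20_recurrence:
  assumes rec: "F20_recurrence q a b p" and q: "4 * q^2 = 1"
  shows "Dminus b a nu p = smult (nu + b - a/2 - 1 - q * a) (cmt b p)"
proof (rule poly_eqI)
  fix m
  show "coeff (Dminus b a nu p) m = coeff (smult (nu + b - a/2 - 1 - q * a) (cmt b p)) m"
  proof (cases m)
    case 0
    then show ?thesis
      using rec[unfolded F20_recurrence_def, rule_format, of 0]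
      by (simp add: coeff_Dminus_0 coeff_cmt algebra_simps)
  next
    case (Suc j)
    have step: "of_nat (Suc (Suc j)) * coeff p (Suc (Suc j))
        = q * (a - of_nat (Suc j)) * (b - of_nat (Suc j)) * coeff p (Suc j)"
      using rec unfolding F20_recurrence_def by blast
    have prev: "(b - of_nat j) * (a - of_nat j) / 4 * coeff p j = q * (of_nat (Suc j) * coeff p (Suc j))"
      using q rec[unfolded F20_recurrence_def, rule_format, of j] by algebra
    show ?thesis
      unfolding Suc coeff_Dminus_Suc step prev by (simp add: coeff_cmt algebra_simps)
  qed
qed

lemma coeff_p_pm: "coeff (p_pm s k l) m = s ^ m / 2 ^ m * fact m * of_nat (k choose m) * of_nat (l choose m)"
proof -
  have "coeff (p_pm s k l) m = (\<Sum>i\<le>min k l. if i = m then s ^ m / 2 ^ m * fact m * of_nat (k choose m) * of_nat (l choose m) else 0)"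
    unfolding p_pm_def by (simp add: coeff_sum coeff_monom)
  also have "\<dots> = s ^ m / 2 ^ m * fact m * of_nat (k choose m) * of_nat (l choose m)"
    by (cases "m \<le> min k l") auto
  finally show ?thesis .
qed

lemma degree_p_pm: "degree (p_pm s k l) \<le> min k l"
  by (rule degree_le) (auto simp: coeff_p_pm)

lemma of_nat_Suc_mult_choose_Suc:
  "of_nat (Suc j) * of_nat (n choose Suc j) = of_nat (n choose j) * (of_nat n - of_nat j :: 'a::comm_ring_1)"
proof (cases "j \<le> n")
  case True
  have "of_nat (Suc j * (n choose Suc j)) = (of_nat ((n choose j) * (n - j)) :: 'a)"
    by (metis binomial_absorb_comp binomial_absorption mult.commute)
  then show ?thesis by (simp only: of_nat_mult of_nat_diff[OF True])
qed (simp add: binomial_eq_0)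

lemma coeff_p_pm_0: "coeff (p_pm s k l) 0 = 1"
  by (simp add: coeff_p_pm)

lemma F20_recurrence_p_pm: "F20_recurrence (s / 2) (of_nat k) (of_nat l) (p_pm s k l)"
proof -
  have "of_nat (Suc j) * coeff (p_pm s k l) (Suc j)
      = s ^ Suc j / 2 ^ Suc j * fact j
        * (of_nat (Suc j) * of_nat (k choose Suc j)) * (of_nat (Suc j) * of_nat (l choose Suc j))" for j
    by (simp add: coeff_p_pm fact_Suc algebra_simps del: of_nat_Suc)
  also have "\<dots> j = s / 2 * (of_nat k - of_nat j) * (of_nat l - of_nat j) * coeff (p_pm s k l) j" for j
    unfolding of_nat_Suc_mult_choose_Suc coeff_p_pm by (simp add: field_simps)
  finally show ?thesis unfolding F20_recurrence_def by blast
qed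

lemma F20_recurrence_if_Dplus_add_Dminus_eq_0:
  fixes a b mu nu :: complex
  defines "A \<equiv> mu + a - b/2 - 1" and "B \<equiv> nu + b - a/2 - 1"
  assumes "a \<noteq> 0" and "b \<noteq> 0" and "a \<noteq> b" and c0: "coeff p 0 \<noteq> 0"
    and sum: "Dplus a b mu p + Dminus b a nu p = 0"
  shows "A * a + B * b = 0 \<and> (\<exists>q. q * (A + B) = (a - b) / 4 \<and> F20_recurrence q a b p)"
proof -
  have "(A * a + B * b) * coeff p 0 = 0"
    using coeff_Dplus_add_Dminus_0[of a b mu p nu] sum by (simp add: A_def B_def)
  then have AB0: "A * a + B * b = 0"
    using c0 by simp
  have sum_Suc: "of_nat (Suc j) * (A + B) * coeff p (Suc j) = (a - b) * (a - of_nat j) * (b - of_nat j) / 4 * coeff p j" for j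
  proof -
    have "(A * (a - of_nat (Suc j)) + B * (b - of_nat (Suc j))) * coeff p (Suc j)
        + (a - b) * (a - of_nat j) * (b - of_nat j) / 4 * coeff p j = 0"
      using coeff_Dplus_add_Dminus_Suc[of a b mu p nu j] sum by (simp add: A_def B_def del: of_nat_Suc)
    then show ?thesis using AB0 by algebra
  qed
  have AB: "A + B \<noteq> 0"
  proof
    assume "A + B = 0"
    then show False using sum_Suc[of 0] assms(3-5) c0 by simp
  qed
  define q where "q = (a - b) / 4 / (A + B)"
  have q: "q * (A + B) = (a - b) / 4"
    using q_def nonzero_eq_divide_eq[OF AB] by blast
  have "(A + B) * (of_nat (Suc j) * coeff p (Suc j)) = (A + B) * (q * (a - of_nat j) * (b - of_nat j) * coeff p j)" for j
    using sum_Suc[of j] q by algebra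
  then have "F20_recurrence q a b p"
    using AB unfolding F20_recurrence_def by simp
  with AB0 q show ?thesis by blast
qed

lemma F20_recurrence_if_Dplus_Dminus_eq_0:
  assumes "a \<noteq> 0" and "b \<noteq> 0" and "a \<noteq> b" and p: "p \<noteq> 0"
    and plus: "Dplus a b mu p = 0" and minus: "Dminus b a nu p = 0"
  shows "\<exists>q. 4 * q^2 = 1 \<and> mu + a - b/2 - 1 = - q * b \<and> nu + b - a/2 - 1 = q * a \<and> F20_recurrence q a b p"
proof -
  define A where "A = mu + a - b/2 - 1"
  define B where "B = nu + b - a/2 - 1"
  have c0: "coeff p 0 \<noteq> 0"
    using Dplus_eq_0_coeff_0_imp_eq_0[OF plus] p by blast
  obtain q where AB0: "A * a + B * b = 0" and q: "q * (A + B) = (a - b) / 4"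
    and rec: "F20_recurrence q a b p"
    using F20_recurrence_if_Dplus_add_Dminus_eq_0[OF assms(1-3) c0, of mu nu] plus minus
    unfolding A_def B_def by auto
  have "(A + q * b) * a * coeff p 0 = 0"
    using coeff_Dplus_0[of a b mu p] rec[unfolded F20_recurrence_def, rule_format, of 0] plus
    by (simp add: A_def algebra_simps)
  then have "A + q * b = 0"
    using assms(1) c0 by simp
  then have A: "A = - q * b"
    by algebra
  have "(B - q * a) * b = 0"
    using AB0 A by (simp add: algebra_simps)
  then have B: "B = q * a"
    using assms(2) by simp
  have "(4 * q^2 - 1) * (a - b) = 0"
    using q unfolding A B by algebra
  then have "4 * q^2 = 1"
    using assms(3) by simp
  with A B rec show ?thesis unfolding A_def B_def by blast
qed

lemma smult_in_SolTilde: "p \<in> SolTilde k l nu1 nu2 \<Longrightarrow> smult c p \<in> SolTilde k l nu1 nu2"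
  unfolding SolTilde_def using degree_smult_le[of c p] by (auto simp: Dplus_smult Dminus_smult)

lemma zero_in_SolTilde: "0 \<in> SolTilde k l nu1 nu2"
  using Dplus_smult[of _ _ _ 0 0] Dminus_smult[of _ _ _ 0 0] by (simp add: SolTilde_def)

lemma p_pm_in_SolTilde:
  fixes s :: complex
  assumes "s^2 = 1"
  shows "p_pm s k l \<in> SolTilde k l (-(1 - of_nat k + (1 - s) / 2 * of_nat l)) (-(1 - of_nat l + (1 + s) / 2 * of_nat k))"
proof -
  have q: "4 * (s / 2)^2 = 1"
    using assms by (simp add: power_divide)
  show ?thesis
    unfolding SolTilde_def minus_minus
    using degree_p_pm Dplus_eq_smult_cmt_if_F20_recurrence[OF F20_recurrence_p_pm q] Dminus_eq_smult_cmt_if_F20_recurrence[OF F20_recurrence_p_pm q]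
    by (simp add: field_simps)
qed

lemma nonzero_in_SolTilde_imp:
  assumes "k \<noteq> 0" and "l \<noteq> 0" and "k \<noteq> l"
    and "p \<in> SolTilde k l (-la1) (-la2)" and "p \<noteq> 0"
  shows "\<exists>s. s^2 = 1 \<and> la1 = 1 - of_nat k + (1 - s) / 2 * of_nat l
           \<and> la2 = 1 - of_nat l + (1 + s) / 2 * of_nat k \<and> p = smult (coeff p 0) (p_pm s k l)"
proof -
  obtain q where q: "4 * q^2 = 1"
    and la1: "la1 + of_nat k - of_nat l / 2 - 1 = - q * of_nat l"
    and la2: "la2 + of_nat l - of_nat k / 2 - 1 = q * of_nat k"
    and rec: "F20_recurrence q (of_nat k) (of_nat l) p"
    using F20_recurrence_if_Dplus_Dminus_eq_0[of "of_nat k" "of_nat l" p la1 la2] assms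
    by (auto simp: SolTilde_def)
  have "p = smult (coeff p 0) (p_pm (2 * q) k l)"
    using F20_recurrence_unique[OF rec _ coeff_p_pm_0] F20_recurrence_p_pm[of "2 * q" k l] by simp
  moreover have "(2 * q)^2 = 1"
    using q by (simp add: power_mult_distrib)
  ultimately show ?thesis
    using la1 la2 by (intro exI[of _ "2 * q"]) (auto simp: field_simps)
qed

lemma SolTilde_eq_range_smult_p_pm:
  assumes "k \<noteq> 0" and "l \<noteq> 0" and "k \<noteq> l" and "s^2 = 1"
  shows "SolTilde k l (-(1 - of_nat k + (1 - s) / 2 * of_nat l)) (-(1 - of_nat l + (1 + s) / 2 * of_nat k))
           = range (\<lambda>c. smult c (p_pm s k l))"
proof (intro antisym subsetI)
  fix p
  assume p: "p \<in> SolTilde k l (-(1 - of_nat k + (1 - s) / 2 * of_nat l)) (-(1 - of_nat l + (1 + s) / 2 * of_nat k))"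
  show "p \<in> range (\<lambda>c. smult c (p_pm s k l))"
  proof (cases "p = 0")
    case False
    then obtain s' where "(1 - s) / 2 * of_nat l = (1 - s') / 2 * (of_nat l :: complex)"
      and "p = smult (coeff p 0) (p_pm s' k l)"
      using nonzero_in_SolTilde_imp[OF assms(1-3) p] by auto
    then show ?thesis
      using assms(2) by auto
  qed (auto intro: range_eqI[of _ _ 0])
qed (use p_pm_in_SolTilde[OF assms(4)] smult_in_SolTilde in auto)

lemma SolTilde_neq_zero_iff:
  assumes "k \<noteq> 0" and "l \<noteq> 0" and "k \<noteq> l"
  shows "SolTilde k l (-la1) (-la2) \<noteq> {0} \<longleftrightarrow>
    (\<exists>s. s^2 = 1 \<and> la1 = 1 - of_nat k + (1 - s) / 2 * of_nat l \<and> la2 = 1 - of_nat l + (1 + s) / 2 * of_nat k)"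
proof
  assume "SolTilde k l (-la1) (-la2) \<noteq> {0}"
  then obtain p where "p \<in> SolTilde k l (-la1) (-la2)" and "p \<noteq> 0"
    using zero_in_SolTilde by blast
  then show "\<exists>s. s^2 = 1 \<and> la1 = 1 - of_nat k + (1 - s) / 2 * of_nat l \<and> la2 = 1 - of_nat l + (1 + s) / 2 * of_nat k"
    using nonzero_in_SolTilde_imp[OF assms] by blast
next
  assume "\<exists>s. s^2 = 1 \<and> la1 = 1 - of_nat k + (1 - s) / 2 * of_nat l \<and> la2 = 1 - of_nat l + (1 + s) / 2 * of_nat k"
  moreover have "p_pm s k l \<noteq> 0" for s
    using coeff_p_pm_0[of s k l] by auto
  ultimately show "SolTilde k l (-la1) (-la2) \<noteq> {0}"
    using p_pm_in_SolTilde by blast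
qed

theorem proposition6p3:
  fixes k l :: nat and la1 la2 :: complex
  assumes "k \<ge> 1" and "l \<ge> 1" and "k \<noteq> l"
  shows "(SolTilde k l (-la1) (-la2) \<noteq> {0} \<longleftrightarrow>
            (la1, la2) \<in> {(1 - of_nat k, 1 - of_nat l + of_nat k), (1 - of_nat k + of_nat l, 1 - of_nat l)})
    \<and> SolTilde k l (-(1 - of_nat k)) (-(1 - of_nat l + of_nat k)) = range (\<lambda>c. smult c (p_plus k l))
    \<and> SolTilde k l (-(1 - of_nat k + of_nat l)) (-(1 - of_nat l)) = range (\<lambda>c. smult c (p_minus k l))"
proof -
  have kl: "k \<noteq> 0" "l \<noteq> 0" "k \<noteq> l"
    using assms by auto
  have "SolTilde k l (-la1) (-la2) \<noteq> {0} \<longleftrightarrow>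
            (la1, la2) \<in> {(1 - of_nat k, 1 - of_nat l + of_nat k), (1 - of_nat k + of_nat l, 1 - of_nat l)}"
    unfolding SolTilde_neq_zero_iff[OF kl] power2_eq_1_iff by auto
  moreover have "SolTilde k l (-(1 - of_nat k)) (-(1 - of_nat l + of_nat k)) = range (\<lambda>c. smult c (p_plus k l))"
    using SolTilde_eq_range_smult_p_pm[OF kl, of 1] by simp
  moreover have "SolTilde k l (-(1 - of_nat k + of_nat l)) (-(1 - of_nat l)) = range (\<lambda>c. smult c (p_minus k l))"
    using SolTilde_eq_range_smult_p_pm[OF kl, of "-1"] by simp
  ultimately show ?thesis by blast
qed

end
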